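(* In the general framework (continuous $f_{l,n}:\Omega\to\mathbb R^d$, $l=1,\ldots,R_n$, $Y_n(\omega)=\{f_{l,n}(\omega)\}_l$), let $\omega\in\Omega$ and suppose that for some $s>0$, $\liminf_{n\to\infty}T(Y_n(\omega),sR_n^{-1/d})/R_n=0$. Then there exists $h:\mathbb N\to[0,\infty)$ with $\sum_nh(n)=\infty$ such that $\{x\in\mathbb R^d:x\in\bigcup_{l=1}^{R_n}B(f_{l,n}(\omega),(h(n)/R_n)^{1/d})$ for infinitely many $n\}$ has zero Lebesgue measure.
   Context: $T(Y,r)$ = maximal cardinality of an $r$-separated subset (distinct points at distance $>r$) of a finite set $Y$; $B(x,r)$ closed ball. *)

theory Defs
  imports "HOL-Analysis.Analysis"
begin

definition sep_number :: "'a::metric_space set \<Rightarrow> real \<Rightarrow> nat" where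
  "sep_number Y r = Max {card S | S. S \<subseteq> Y \<and> (\<forall>x\<in>S. \<forall>y\<in>S. x \<noteq> y \<longrightarrow> dist x y > r)}"

end

theory Submission
  imports Defs
begin

text \<open>A maximal \<open>r\<close>-separated subset \<open>S\<close> of \<open>Y\<close> is an \<open>r\<close>-net of \<open>Y\<close>, so the \<open>r\<close>-balls around
  \<open>Y\<close> are covered by \<open>T(Y,r)\<close> balls of radius \<open>2r\<close>. Along a subsequence \<open>n\<^sub>k\<close> with
  \<open>T(Y\<^sub>n, sR\<^sub>n\<^sup>-\<^sup>1\<^sup>/\<^sup>d)/R\<^sub>n < 2\<^sup>-\<^sup>k\<close>, take \<open>h(n) = s\<^sup>d\<close>, which makes the radius exactly \<open>sR\<^sub>n\<^sup>-\<^sup>1\<^sup>/\<^sup>d\<close>,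
  and take \<open>h(n) = 0\<close> elsewhere, where the balls shrink to points. Then \<open>h\<close> is not summable,
  while the measures of the unions of balls are summable, and Borel--Cantelli applies.\<close>

lemma sep_number_covering_subset:
  fixes Y :: "'a::metric_space set"
  assumes "finite Y" and "r \<ge> 0"
  shows "\<exists>S\<subseteq>Y. card S = sep_number Y r \<and> Y \<subseteq> (\<Union>x\<in>S. cball x r)"
proof -
  let ?C = "{card S | S. S \<subseteq> Y \<and> (\<forall>x\<in>S. \<forall>y\<in>S. x \<noteq> y \<longrightarrow> dist x y > r)}"
  have "?C \<subseteq> card ` Pow Y" by auto
  then have fin_C: "finite ?C"
    using \<open>finite Y\<close> by (meson finite_Pow_iff finite_imageI finite_subset)
  have "sep_number Y r \<in> ?C"
    unfolding sep_number_def by (rule Max_in[OF fin_C]) auto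
  then obtain S where S: "S \<subseteq> Y" "card S = sep_number Y r"
    and sep: "\<forall>x\<in>S. \<forall>y\<in>S. x \<noteq> y \<longrightarrow> dist x y > r"
    by auto
  have "Y \<subseteq> (\<Union>x\<in>S. cball x r)"
  proof
    fix y assume "y \<in> Y"
    show "y \<in> (\<Union>x\<in>S. cball x r)"
    proof (rule ccontr)
      assume "y \<notin> (\<Union>x\<in>S. cball x r)"
      then have far: "\<forall>x\<in>S. dist x y > r" by (auto simp: not_le)
      then have "y \<notin> S" using \<open>r \<ge> 0\<close> by fastforce
      have "card (insert y S) \<in> ?C"
        using S sep far \<open>y \<in> Y\<close> by (auto simp: dist_commute)
      then have "card (insert y S) \<le> sep_number Y r"
        unfolding sep_number_def using fin_C by simp
      moreover have "finite S" using S \<open>finite Y\<close> finite_subset by blast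
      ultimately show False using \<open>y \<notin> S\<close> S by simp
    qed
  qed
  with S show ?thesis by blast
qed

lemma measure_UN_cball_le_sep_number:
  fixes Y :: "'a::euclidean_space set"
  assumes "finite Y" and "r \<ge> 0"
  shows "measure lebesgue (\<Union>y\<in>Y. cball y r)
           \<le> unit_ball_vol DIM('a) * real (sep_number Y r) * (2 * r) ^ DIM('a)"
proof -
  obtain S where S: "S \<subseteq> Y" "card S = sep_number Y r" and cover: "Y \<subseteq> (\<Union>x\<in>S. cball x r)"
    using sep_number_covering_subset[OF assms] by blast
  have "finite S" using S \<open>finite Y\<close> finite_subset by blast
  have "(\<Union>y\<in>Y. cball y r) \<subseteq> (\<Union>x\<in>S. cball x (2 * r))"
  proof
    fix z assume "z \<in> (\<Union>y\<in>Y. cball y r)"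
    then obtain y where "y \<in> Y" "dist y z \<le> r" by auto
    then obtain x where "x \<in> S" "dist x y \<le> r" using cover by auto
    have "dist x z \<le> 2 * r"
      using dist_triangle[of x z y] \<open>dist x y \<le> r\<close> \<open>dist y z \<le> r\<close> by linarith
    with \<open>x \<in> S\<close> show "z \<in> (\<Union>x\<in>S. cball x (2 * r))" by auto
  qed
  moreover have "(\<Union>x\<in>S. cball x (2 * r)) \<in> lmeasurable"
    using \<open>finite S\<close> by (intro lmeasurable_compact compact_UN) auto
  ultimately have "measure lebesgue (\<Union>y\<in>Y. cball y r) \<le> measure lebesgue (\<Union>x\<in>S. cball x (2 * r))"
    using \<open>finite Y\<close> by (intro measure_mono_fmeasurable) (auto intro: fmeasurableD)
  also have "\<dots> \<le> (\<Sum>x\<in>S. measure lebesgue (cball x (2 * r)))"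
    by (rule measure_UNION_le) (use \<open>finite S\<close> in auto)
  also have "\<dots> = (\<Sum>x\<in>S. unit_ball_vol DIM('a) * (2 * r) ^ DIM('a))"
    using \<open>r \<ge> 0\<close> by (intro sum.cong refl) (simp add: content_cball)
  finally show ?thesis using S by (simp add: mult.assoc mult.left_commute)
qed

lemma null_sets_limsup_UN_cball:
  fixes Y :: "nat \<Rightarrow> 'a::euclidean_space set"
  assumes "\<And>n. finite (Y n)" and "\<And>n. \<rho> n \<ge> 0"
    and summable: "summable (\<lambda>n. real (sep_number (Y n) (\<rho> n)) * (2 * \<rho> n) ^ DIM('a))"
  shows "{x. \<exists>\<^sub>\<infinity>n. x \<in> (\<Union>y\<in>Y n. cball y (\<rho> n))} \<in> null_sets lebesgue"
proof -
  define A where "A n = (\<Union>y\<in>Y n. cball y (\<rho> n))" for n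
  have A_lmeasurable: "A n \<in> lmeasurable" for n
    unfolding A_def using assms(1) by (intro lmeasurable_compact compact_UN) auto
  have "limsup A \<in> null_sets lebesgue"
  proof (rule borel_cantelli_limsup1)
    show "A n \<in> sets lebesgue" and "emeasure lebesgue (A n) < \<infinity>" for n
      using A_lmeasurable[of n] by (auto simp: fmeasurable_def)
    show "summable (\<lambda>n. measure lebesgue (A n))"
    proof (rule summable_comparison_test')
      show "summable (\<lambda>n. unit_ball_vol DIM('a) * (real (sep_number (Y n) (\<rho> n)) * (2 * \<rho> n) ^ DIM('a)))"
        using summable by (rule summable_mult)
      show "norm (measure lebesgue (A n))
              \<le> unit_ball_vol DIM('a) * (real (sep_number (Y n) (\<rho> n)) * (2 * \<rho> n) ^ DIM('a))" for n
        using measure_UN_cball_le_sep_number[OF assms(1,2), of n] unfolding A_def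
        by (simp add: mult.assoc)
    qed
  qed
  moreover have "limsup A = {x. \<exists>\<^sub>\<infinity>n. x \<in> A n}"
    by (auto simp: mem_limsup_iff cofinite_eq_sequentially)
  ultimately show ?thesis unfolding A_def by simp
qed

lemma null_sets_limsup_UN_cball_subseq:
  fixes Y :: "nat \<Rightarrow> 'a::euclidean_space set"
  assumes "\<And>n. finite (Y n)" and "\<And>n. r n \<ge> 0" and "strict_mono \<sigma>"
    and summable: "summable (\<lambda>k. real (sep_number (Y (\<sigma> k)) (r (\<sigma> k))) * (2 * r (\<sigma> k)) ^ DIM('a))"
  shows "{x. \<exists>\<^sub>\<infinity>n. x \<in> (\<Union>y\<in>Y n. cball y (if n \<in> range \<sigma> then r n else 0))}
           \<in> null_sets lebesgue"
proof (rule null_sets_limsup_UN_cball)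
  define \<rho> where "\<rho> n = (if n \<in> range \<sigma> then r n else 0)" for n
  define g where "g n = real (sep_number (Y n) (\<rho> n)) * (2 * \<rho> n) ^ DIM('a)" for n
  have "summable (\<lambda>k. g (\<sigma> k))"
    using summable by (simp add: g_def \<rho>_def)
  moreover have "g n = 0" if "n \<notin> range \<sigma>" for n
    using that by (simp add: g_def \<rho>_def)
  ultimately show "summable g"
    using summable_mono_reindex[OF \<open>strict_mono \<sigma>\<close>, of g] by blast
qed (use assms(1,2) in auto)

lemma liminf_zero_imp_subseq_below:
  fixes q \<epsilon> :: "nat \<Rightarrow> real"
  assumes "liminf (\<lambda>n. ereal (q n)) = 0" and "\<And>k. \<epsilon> k > 0"
  shows "\<exists>\<sigma>. strict_mono \<sigma> \<and> (\<forall>k. q (\<sigma> k) < \<epsilon> k)"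
proof -
  have "\<exists>\<^sub>F n in sequentially. q n < e" if "e > 0" for e
  proof -
    have "\<not> ereal e \<le> liminf (\<lambda>n. ereal (q n))" using assms(1) that by simp
    then obtain y where "y < ereal e" "\<not> eventually (\<lambda>n. y < ereal (q n)) sequentially"
      unfolding le_Liminf_iff by auto
    then have "\<exists>\<^sub>F n in sequentially. ereal (q n) \<le> y"
      by (simp add: not_eventually not_less)
    then show ?thesis
      by (rule frequently_elim1) (use \<open>y < ereal e\<close> in \<open>auto dest: le_less_trans\<close>)
  qed
  then have later: "\<exists>m>n. q m < \<epsilon> k" for n k
    using assms(2) by (simp add: frequently_sequentially) (metis Suc_le_lessD)
  obtain \<sigma> where "\<forall>k. q (\<sigma> k) < \<epsilon> k \<and> \<sigma> k < \<sigma> (Suc k)"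
    using dependent_nat_choice[of "\<lambda>k m. q m < \<epsilon> k" "\<lambda>_ m m'. m < m'"] later by metis
  then show ?thesis by (auto simp: strict_mono_Suc_iff)
qed

lemma powr_inverse_divide_power:
  fixes s x :: real
  assumes "s > 0" and "x > 0" and "d > 0"
  shows "(s ^ d / x) powr (1 / real d) = s * x powr (-1 / real d)"
proof -
  have "(s ^ d / x) powr (1 / real d) = (s ^ d) powr (1 / real d) / x powr (1 / real d)"
    using assms by (simp add: powr_divide)
  also have "(s ^ d) powr (1 / real d) = s"
    using assms by (simp add: root_powr_inverse[symmetric] real_root_power_cancel)
  also have "1 / x powr (1 / real d) = x powr (-1 / real d)"
    using powr_minus_divide[of x "1 / real d"] by simp
  ultimately show ?thesis by (metis times_divide_eq_right mult.right_neutral)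
qed

lemma power_mult_powr_minus_inverse:
  fixes s x :: real
  assumes "x > 0" and "d > 0"
  shows "(s * x powr (-1 / real d)) ^ d = s ^ d / x"
proof -
  have "(x powr (1 / real d)) ^ d = x"
    using assms by (simp add: root_powr_inverse[symmetric] real_root_pow_pos2)
  then show ?thesis
    using powr_minus_divide[of x "1 / real d"] by (simp add: power_mult_distrib power_divide)
qed

theorem mainTheorem14:
  fixes f :: "nat \<Rightarrow> nat \<Rightarrow> 'b::topological_space \<Rightarrow> 'a::euclidean_space"
    and R :: "nat \<Rightarrow> nat"
    and \<omega> :: 'b and s :: real
  defines "d \<equiv> DIM('a)"
  assumes R_pos: "\<And>n. R n \<ge> 1"
    and f_cont: "\<And>n l. l \<in> {1..R n} \<Longrightarrow> continuous_on UNIV (f l n)"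
    and s_pos: "s > 0"
    and liminf0: "liminf (\<lambda>n. ereal (real (sep_number ((\<lambda>l. f l n \<omega>) ` {1..R n})
                     (s * real (R n) powr (-1 / real d))) / real (R n))) = 0"
  shows "\<exists>h :: nat \<Rightarrow> real. (\<forall>n. h n \<ge> 0) \<and> \<not> summable h \<and>
           {x. \<exists>\<^sub>\<infinity>n. x \<in> (\<Union>l\<in>{1..R n}. cball (f l n \<omega>) ((h n / real (R n)) powr (1 / real d)))}
             \<in> null_sets lebesgue"
proof -
  define Y where "Y n = (\<lambda>l. f l n \<omega>) ` {1..R n}" for n
  define r where "r n = s * real (R n) powr (-1 / real d)" for n
  have R_pos': "real (R n) > 0" for n using R_pos[of n] by simp
  have "d > 0" unfolding d_def by simp
  obtain \<sigma> where \<sigma>: "strict_mono \<sigma>"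
    and small: "\<And>k. real (sep_number (Y (\<sigma> k)) (r (\<sigma> k))) / real (R (\<sigma> k)) < (1/2) ^ k"
    using liminf_zero_imp_subseq_below[of "\<lambda>n. real (sep_number (Y n) (r n)) / real (R n)" "\<lambda>k. (1/2) ^ k"]
      liminf0 unfolding Y_def r_def by auto
  define h where "h n = (if n \<in> range \<sigma> then s ^ d else 0)" for n
  have h_nonneg: "\<forall>n. h n \<ge> 0" unfolding h_def using s_pos by simp
  have "\<not> summable h"
    using summable_mono_reindex[OF \<sigma>, of h] s_pos by (simp add: h_def summable_const_iff)
  have "summable (\<lambda>k. real (sep_number (Y (\<sigma> k)) (r (\<sigma> k))) * (2 * r (\<sigma> k)) ^ d)"
  proof (rule summable_comparison_test')
    show "summable (\<lambda>k. 2 ^ d * s ^ d * (1/2::real) ^ k)" by simp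
    have "real (sep_number (Y n) (r n)) * (2 * r n) ^ d
            = 2 ^ d * s ^ d * (real (sep_number (Y n) (r n)) / real (R n))" for n
      using power_mult_powr_minus_inverse[OF R_pos' \<open>d > 0\<close>]
      by (simp add: r_def power_mult_distrib)
    then show "norm (real (sep_number (Y (\<sigma> k)) (r (\<sigma> k))) * (2 * r (\<sigma> k)) ^ d)
            \<le> 2 ^ d * s ^ d * (1/2) ^ k" for k
      using mult_left_mono[OF less_imp_le[OF small[of k]], of "2 ^ d * s ^ d"] s_pos by simp
  qed
  then have "{x. \<exists>\<^sub>\<infinity>n. x \<in> (\<Union>y\<in>Y n. cball y (if n \<in> range \<sigma> then r n else 0))}
               \<in> null_sets lebesgue"
    using \<sigma> s_pos R_pos' unfolding d_def
    by (intro null_sets_limsup_UN_cball_subseq) (auto simp: Y_def r_def)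
  moreover have "(h n / real (R n)) powr (1 / real d) = (if n \<in> range \<sigma> then r n else 0)" for n
    using powr_inverse_divide_power[OF s_pos R_pos' \<open>d > 0\<close>] by (simp add: h_def r_def)
  ultimately show ?thesis
    using h_nonneg \<open>\<not> summable h\<close> by (auto simp: Y_def)
qed
end
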